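(* Let $(X,\pi)$ be a finite symmetric two-player game with relative payoff game $(X,\Delta)$. Imitation is subject to a money pump in $(X,\pi)$ if and only if $(X,\Delta)$ is a generalized rock-paper-scissors game.
   Context: A symmetric two-player game $(X,\pi)$: both players have action set $X$ and a bounded payoff function $\pi:X\times X\to\mathbb{R}$, where $\pi(x,y)$ is the payoff of the player choosing $x$ against an opponent choosing $y$. The relative payoff function is $\Delta(x,y)=\pi(x,y)-\pi(y,x)$ and $(X,\Delta)$ is the relative payoff game (a symmetric zero-sum game, $\Delta(x,y)=-\Delta(y,x)$). Imitate-the-best: given an initial action $y_0\in X$ of the imitator and any sequence $(x_t)_{t\ge 0}$ of actions of the opponent, the imitator plays $y_t=x_{t-1}$ if $\Delta(x_{t-1},y_{t-1})>0$ and $y_t=y_{t-1}$ otherwise. Imitation is not subject to a money pump if there exists $M\in\mathbb{R}_+$ such that for every $y_0\in X$ and every sequence $(x_t)_{t\ge0}$ in $X$, $\limsup_{T\to\infty}\sum_{t=0}^{T}\Delta(x_t,y_t)\le M$; otherwise imitation is subject to a money pump. A symmetric zero-sum game $(Y,\Delta)$ (i.e. $\Delta(x,y)=-\Delta(y,x)$) is a generalized rock-paper-scissors matrix if for every $y\in Y$ there is $x\in Y$ with $\Delta(x,y)>0$. A symmetric zero-sum game $(X,\Delta)$ is a generalized rock-paper-scissors game if there is a nonempty subset $\bar X\subseteq X$ such that the restriction $(\bar X,\Delta|_{\bar X\times\bar X})$ is a generalized rock-paper-scissors matrix. *)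

theory Defs
  imports "HOL-Analysis.Analysis" "HOL-Library.Liminf_Limsup"
begin

definition rel_payoff :: "('a \<Rightarrow> 'a \<Rightarrow> real) \<Rightarrow> 'a \<Rightarrow> 'a \<Rightarrow> real" where
  "rel_payoff p x y = p x y - p y x"

fun imitate :: "('a \<Rightarrow> 'a \<Rightarrow> real) \<Rightarrow> 'a \<Rightarrow> (nat \<Rightarrow> 'a) \<Rightarrow> nat \<Rightarrow> 'a" where
  "imitate D y0 xs 0 = y0"
| "imitate D y0 xs (Suc t) =
     (if D (xs t) (imitate D y0 xs t) > 0 then xs t else imitate D y0 xs t)"

definition no_money_pump :: "'a set \<Rightarrow> ('a \<Rightarrow> 'a \<Rightarrow> real) \<Rightarrow> bool" where
  "no_money_pump X p \<longleftrightarrow>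
     (\<exists>M::real. M \<ge> 0 \<and>
        (\<forall>y0 \<in> X. \<forall>xs. (\<forall>t. xs t \<in> X) \<longrightarrow>
           limsup (\<lambda>T. ereal (\<Sum>t\<le>T. rel_payoff p (xs t) (imitate (rel_payoff p) y0 xs t)))
             \<le> ereal M))"

definition money_pump :: "'a set \<Rightarrow> ('a \<Rightarrow> 'a \<Rightarrow> real) \<Rightarrow> bool" where
  "money_pump X p \<longleftrightarrow> \<not> no_money_pump X p"

definition grps_matrix :: "'a set \<Rightarrow> ('a \<Rightarrow> 'a \<Rightarrow> real) \<Rightarrow> bool" where
  "grps_matrix Y D \<longleftrightarrow> (\<forall>y \<in> Y. \<exists>x \<in> Y. D x y > 0)"

definition grps_game :: "'a set \<Rightarrow> ('a \<Rightarrow> 'a \<Rightarrow> real) \<Rightarrow> bool" where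
  "grps_game X D \<longleftrightarrow> (\<exists>Xb. Xb \<subseteq> X \<and> Xb \<noteq> {} \<and> grps_matrix Xb D)"

end

theory Submission
  imports Defs
begin

text \<open>
  If no nonempty subset of X is a generalized rock-paper-scissors matrix, then every nonempty
  subset has an element that nothing in it beats. Peeling such elements off one by one ranks X
  so that every strict improvement lowers the rank. The imitator only switches on a strict
  improvement, so it switches fewer than |X| times, and between switches the opponent gains
  nothing; hence the opponent's total gain is bounded.

  Conversely, on a generalized rock-paper-scissors matrix the opponent can always play an action
  that strictly beats the imitator's current action; the imitator copies it, and the opponent
  answers again. Each round gains at least the least of these finitely many positive margins, so
  the gain grows linearly.
\<close>

lemma improvement_rank_exists:
  assumes "finite S" "\<not> grps_game S D"
  shows "\<exists>r::'a \<Rightarrow> nat. (\<forall>x\<in>S. \<forall>y\<in>S. D x y > 0 \<longrightarrow> r x < r y) \<and> (\<forall>y\<in>S. r y < card S)"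
  using assms
proof (induction "card S" arbitrary: S)
  case 0
  then show ?case by auto
next
  case (Suc n)
  then have "S \<noteq> {}" by auto
  with Suc.prems have "\<not> grps_matrix S D" unfolding grps_game_def by blast
  then obtain y where y: "y \<in> S" "\<forall>x\<in>S. \<not> D x y > 0" unfolding grps_matrix_def by auto
  have card_rest: "card (S - {y}) = n" using Suc.hyps(2) y(1) Suc.prems(1) by simp
  have "\<not> grps_game (S - {y}) D" using Suc.prems(2) unfolding grps_game_def by blast
  then obtain r where r: "\<forall>x\<in>S-{y}. \<forall>z\<in>S-{y}. D x z > 0 \<longrightarrow> r x < r z"
      "\<forall>z\<in>S-{y}. r z < n"
    using Suc.hyps(1)[OF card_rest[symmetric]] Suc.prems(1) card_rest by auto
  define r' where "r' = (\<lambda>z. Suc (r z))(y := 0)"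
  have "r' x < r' z" if "x \<in> S" "z \<in> S" "D x z > 0" for x z
  proof -
    have "z \<noteq> y" using y that by auto
    then show ?thesis using r(1) that unfolding r'_def by (cases "x = y") auto
  qed
  moreover have "r' z < card S" if "z \<in> S" for z
    using r(2) that Suc.hyps(2)[symmetric] unfolding r'_def by (cases "z = y") auto
  ultimately show ?case by blast
qed

lemma imitate_in:
  assumes "y0 \<in> X" "\<And>t. xs t \<in> X"
  shows "imitate D y0 xs t \<in> X"
  using assms by (induction t) auto

text \<open>The rank of the imitator's action is a potential paying for the opponent's gains.\<close>

lemma imitation_gain_le_rank_drop:
  fixes r :: "'a \<Rightarrow> nat" and B :: real
  assumes rank: "\<And>x y. x \<in> X \<Longrightarrow> y \<in> X \<Longrightarrow> D x y > 0 \<Longrightarrow> r x < r y"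
    and bound: "\<And>x y. x \<in> X \<Longrightarrow> y \<in> X \<Longrightarrow> D x y \<le> B"
    and "B \<ge> 0" "y0 \<in> X" "\<And>t. xs t \<in> X"
  shows "(\<Sum>t<T. D (xs t) (imitate D y0 xs t)) + B * r (imitate D y0 xs T) \<le> B * r y0"
proof (induction T)
  case 0
  then show ?case by simp
next
  case (Suc T)
  let ?y = "imitate D y0 xs"
  have y_in: "?y T \<in> X" using assms imitate_in by metis
  have "D (xs T) (?y T) + B * r (?y (Suc T)) \<le> B * r (?y T)"
  proof (cases "D (xs T) (?y T) > 0")
    case True
    then have "real (r (?y (Suc T))) + 1 \<le> r (?y T)"
      using rank[OF _ y_in] assms(5) by fastforce
    then have "B * (real (r (?y (Suc T))) + 1) \<le> B * r (?y T)"
      using \<open>B \<ge> 0\<close> by (rule mult_left_mono)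
    moreover have "D (xs T) (?y T) \<le> B" using bound assms(5) y_in by blast
    ultimately show ?thesis by (simp add: algebra_simps)
  qed simp
  with Suc.IH show ?case by simp
qed

lemma imitation_gain_bounded_if_not_grps_game:
  assumes "finite X" "\<not> grps_game X D"
  shows "\<exists>M\<ge>0. \<forall>y0\<in>X. \<forall>xs. (\<forall>t. xs t \<in> X) \<longrightarrow>
           (\<forall>T. (\<Sum>t\<le>T. D (xs t) (imitate D y0 xs t)) \<le> M)"
proof -
  obtain r :: "'a \<Rightarrow> nat" where rank: "\<forall>x\<in>X. \<forall>y\<in>X. D x y > 0 \<longrightarrow> r x < r y"
      and rank_less: "\<forall>y\<in>X. r y < card X"
    using improvement_rank_exists[OF assms] by blast
  define B where "B = Max (insert 0 (case_prod D ` (X \<times> X)))"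
  have "B \<ge> 0" unfolding B_def using assms(1) by simp
  have bound: "D x y \<le> B" if "x \<in> X" "y \<in> X" for x y
    unfolding B_def using assms(1) that by (intro Max_ge) force+
  have "(\<Sum>t\<le>T. D (xs t) (imitate D y0 xs t)) \<le> B * card X"
    if "y0 \<in> X" "\<forall>t. xs t \<in> X" for y0 xs T
  proof -
    have "(\<Sum>t<Suc T. D (xs t) (imitate D y0 xs t)) + B * r (imitate D y0 xs (Suc T))
        \<le> B * r y0"
      using rank bound \<open>B \<ge> 0\<close> that by (intro imitation_gain_le_rank_drop) auto
    moreover have "0 \<le> B * r (imitate D y0 xs (Suc T))" using \<open>B \<ge> 0\<close> by simp
    ultimately have "(\<Sum>t\<le>T. D (xs t) (imitate D y0 xs t)) \<le> B * r y0"
      by (simp add: lessThan_Suc_atMost)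
    also have "\<dots> \<le> B * card X"
      using rank_less that(1) \<open>B \<ge> 0\<close> by (intro mult_left_mono) auto
    finally show ?thesis .
  qed
  then show ?thesis using \<open>B \<ge> 0\<close> by (intro exI[of _ "B * card X"]) auto
qed

lemma imitate_follows_improvements:
  assumes "\<And>y. y \<in> S \<Longrightarrow> f y \<in> S \<and> D (f y) y > 0" "y0 \<in> S"
  shows "imitate D y0 (\<lambda>t. f ((f ^^ t) y0)) t = (f ^^ t) y0"
proof (induction t)
  case (Suc t)
  have "(f ^^ t) y0 \<in> S" using assms by (induction t) auto
  with Suc show ?case using assms(1) by simp
qed simp

lemma imitation_gain_linear_if_grps_game:
  assumes "finite X" "grps_game X D"
  shows "\<exists>y0\<in>X. \<exists>xs. (\<forall>t. xs t \<in> X) \<and>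
           (\<exists>c>0. \<forall>T. c * real T \<le> (\<Sum>t\<le>T. D (xs t) (imitate D y0 xs t)))"
proof -
  obtain S where S: "S \<subseteq> X" "S \<noteq> {}" "grps_matrix S D"
    using assms(2) unfolding grps_game_def by blast
  obtain f where f: "\<And>y. y \<in> S \<Longrightarrow> f y \<in> S \<and> D (f y) y > 0"
    using S(3) unfolding grps_matrix_def by metis
  obtain y0 where "y0 \<in> S" using S(2) by blast
  define xs where "xs = (\<lambda>t. f ((f ^^ t) y0))"
  define c where "c = Min ((\<lambda>y. D (f y) y) ` S)"
  have "finite S" using S(1) assms(1) finite_subset by blast
  then have "c > 0" unfolding c_def using S(2) f by auto
  have iter_in: "(f ^^ t) y0 \<in> S" for t using \<open>y0 \<in> S\<close> f by (induction t) auto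
  have imitates: "imitate D y0 xs t = (f ^^ t) y0" for t
    unfolding xs_def using f \<open>y0 \<in> S\<close> by (rule imitate_follows_improvements)
  have step_gain: "c \<le> D (xs t) (imitate D y0 xs t)" for t
    unfolding imitates unfolding xs_def c_def using \<open>finite S\<close> iter_in by simp
  have "c * real T \<le> (\<Sum>t\<le>T. D (xs t) (imitate D y0 xs t))" for T
  proof -
    have "c * real T \<le> (\<Sum>t\<le>T. c)" using \<open>c > 0\<close> by simp
    also have "\<dots> \<le> (\<Sum>t\<le>T. D (xs t) (imitate D y0 xs t))" by (intro sum_mono step_gain)
    finally show ?thesis .
  qed
  moreover have "xs t \<in> X" for t using iter_in f S(1) unfolding xs_def by blast
  ultimately show ?thesis using \<open>c > 0\<close> \<open>y0 \<in> S\<close> S(1) by blast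
qed

lemma limsup_unbounded_if_linear_growth:
  fixes s :: "nat \<Rightarrow> real"
  assumes "c > 0" "\<And>T. c * real T \<le> s T"
  shows "\<not> limsup (\<lambda>T. ereal (s T)) \<le> ereal M"
proof
  assume "limsup (\<lambda>T. ereal (s T)) \<le> ereal M"
  then have "limsup (\<lambda>T. ereal (s T)) < ereal (M + 1)" by (rule order.strict_trans1) simp
  then have "eventually (\<lambda>T. s T < M + 1) sequentially" by (auto dest: Limsup_lessD)
  then obtain N where N: "\<And>T. T \<ge> N \<Longrightarrow> s T < M + 1"
    unfolding eventually_sequentially by blast
  obtain K :: nat where "(M + 1) / c < K" using reals_Archimedean2 by blast
  then have "M + 1 < c * K" using \<open>c > 0\<close> by (simp add: field_simps)
  also have "\<dots> \<le> c * max N K" using \<open>c > 0\<close> by simp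
  also have "\<dots> \<le> s (max N K)" by (rule assms(2))
  finally show False using N[of "max N K"] by simp
qed

theorem theorem1:
  fixes X :: "'a set" and p :: "'a \<Rightarrow> 'a \<Rightarrow> real"
  assumes "finite X"
  shows "money_pump X p \<longleftrightarrow> grps_game X (rel_payoff p)"
proof
  assume "money_pump X p"
  show "grps_game X (rel_payoff p)"
  proof (rule ccontr)
    assume "\<not> grps_game X (rel_payoff p)"
    then obtain M where "M \<ge> 0" and M: "\<forall>y0\<in>X. \<forall>xs. (\<forall>t. xs t \<in> X) \<longrightarrow>
        (\<forall>T. (\<Sum>t\<le>T. rel_payoff p (xs t) (imitate (rel_payoff p) y0 xs t)) \<le> M)"
      using imitation_gain_bounded_if_not_grps_game[OF assms] by blast
    have "no_money_pump X p"
      unfolding no_money_pump_def using \<open>M \<ge> 0\<close> M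
      by (intro exI[of _ M]) (auto intro: Limsup_bounded)
    with \<open>money_pump X p\<close> show False unfolding money_pump_def by simp
  qed
next
  assume "grps_game X (rel_payoff p)"
  then obtain y0 xs c where "y0 \<in> X" "\<forall>t. xs t \<in> X" "c > 0"
      and gain: "\<forall>T. c * real T \<le> (\<Sum>t\<le>T. rel_payoff p (xs t) (imitate (rel_payoff p) y0 xs t))"
    using imitation_gain_linear_if_grps_game[OF assms] by blast
  then show "money_pump X p"
    unfolding money_pump_def no_money_pump_def
    using limsup_unbounded_if_linear_growth[OF \<open>c > 0\<close> gain[rule_format]] by blast
qed

end
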